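(* Let $p$ be an odd prime, let $\mathcal{Y}$ be an expansion of $(\mathbb{Z}_p,+,\operatorname{Val}_p)$, and let $\mathcal{Z}$ be the structure induced on $\mathbb{Z}$ by $\mathcal{Y}$. Suppose $\mathcal{Y}$ is dp-minimal and every $\mathcal{Z}$-definable subset of $\mathbb{Z}^n$ is of the form $X\cap Y$, where $X$ is a $\mathcal{Y}$-definable subset of $\mathbb{Z}_p^n$ and $Y$ is a $(\mathbb{Z},+)$-definable subset of $\mathbb{Z}^n$. Then $\mathcal{Z}$ is dp-minimal.
   Context: "Definable" means definable with parameters. The structure induced on $\mathbb{Z}\subseteq\mathbb{Z}_p$ by $\mathcal{Y}$ has an $n$-ary relation defining $\mathbb{Z}^n\cap W$ for each $\mathcal{Y}$-definable $W\subseteq\mathbb{Z}_p^n$. $(\mathbb{Z}_p,+,\operatorname{Val}_p)$ denotes the additive group of $p$-adic integers with the relation $\operatorname{Val}_p(a)\le\operatorname{Val}_p(b)$. *)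

theory Defs
  imports "HOL-Computational_Algebra.Primes"
begin

text \<open>Formulas over relation symbols of type 'r; variables are natural numbers.
  Function symbols are represented by their graphs (relations).\<close>

datatype 'r fm =
    Eq nat nat
  | Rel 'r "nat list"
  | Neg "'r fm"
  | Conj "'r fm" "'r fm"
  | Ex nat "'r fm"

primrec sat :: "'a set \<Rightarrow> ('r \<Rightarrow> 'a list \<Rightarrow> bool) \<Rightarrow> 'r fm \<Rightarrow> (nat \<Rightarrow> 'a) \<Rightarrow> bool" where
  "sat M I (Eq i j) v = (v i = v j)"
| "sat M I (Rel r is) v = I r (map v is)"
| "sat M I (Neg \<phi>) v = (\<not> sat M I \<phi> v)"
| "sat M I (Conj \<phi> \<psi>) v = (sat M I \<phi> v \<and> sat M I \<psi> v)"
| "sat M I (Ex i \<phi>) v = (\<exists>a\<in>M. sat M I \<phi> (v(i := a)))"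

text \<open>Definable (with parameters) subsets of M^n, where M^n is represented by lists of length n.
  Variables 0..n-1 are the free variables; all other variables are parameters from M.\<close>

definition definable :: "'a set \<Rightarrow> ('r \<Rightarrow> 'a list \<Rightarrow> bool) \<Rightarrow> nat \<Rightarrow> 'a list set \<Rightarrow> bool" where
  "definable M I n W \<longleftrightarrow>
     (\<exists>\<phi> ps. (\<forall>i. ps i \<in> M) \<and>
        W = {xs. length xs = n \<and> set xs \<subseteq> M \<and>
                 sat M I \<phi> (\<lambda>i. if i < n then xs ! i else ps i)})"

definition tuples :: "'a set \<Rightarrow> nat \<Rightarrow> 'a list set" where
  "tuples M k = {xs. length xs = k \<and> set xs \<subseteq> M}"

text \<open>dp-minimality: there is no ict-pattern of depth 2 in a single variable x.
  By compactness, an ict-pattern in a monster model exists iff arbitrarily large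
  finite patterns are realised in M itself; we state this finite form.\<close>

definition dp_minimal :: "'a set \<Rightarrow> ('r \<Rightarrow> 'a list \<Rightarrow> bool) \<Rightarrow> bool" where
  "dp_minimal M I \<longleftrightarrow>
     \<not> (\<exists>k l \<Phi> \<Psi>. definable M I (Suc k) \<Phi> \<and> definable M I (Suc l) \<Psi> \<and>
          (\<forall>N::nat. \<exists>a b. (\<forall>i<N. a i \<in> tuples M k) \<and> (\<forall>j<N. b j \<in> tuples M l) \<and>
              (\<forall>i<N. \<forall>j<N. \<exists>c\<in>M.
                  (\<forall>i'<N. (c # a i' \<in> \<Phi>) \<longleftrightarrow> i' = i) \<and>
                  (\<forall>j'<N. (c # b j' \<in> \<Psi>) \<longleftrightarrow> j' = j))))"

text \<open>An element of Z_p is a coherent sequence (a_n) with a_n in {0..<p^n} and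
  a_{n+1} mod p^n = a_n.\<close>

definition Zp :: "nat \<Rightarrow> (nat \<Rightarrow> int) set" where
  "Zp p = {f. \<forall>n. f n = f (Suc n) mod (int p ^ n)}"

definition padd :: "nat \<Rightarrow> (nat \<Rightarrow> int) \<Rightarrow> (nat \<Rightarrow> int) \<Rightarrow> (nat \<Rightarrow> int)" where
  "padd p f g = (\<lambda>n. (f n + g n) mod (int p ^ n))"

text \<open>Val_p(a) \<le> Val_p(b): a \<in> p^n Z_p implies b \<in> p^n Z_p for all n.\<close>

definition pval_le :: "nat \<Rightarrow> (nat \<Rightarrow> int) \<Rightarrow> (nat \<Rightarrow> int) \<Rightarrow> bool" where
  "pval_le p f g \<longleftrightarrow> (\<forall>n. f n = 0 \<longrightarrow> g n = 0)"

definition pembed :: "nat \<Rightarrow> int \<Rightarrow> (nat \<Rightarrow> int)" where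
  "pembed p k = (\<lambda>n. k mod (int p ^ n))"

definition Zadd :: "unit \<Rightarrow> int list \<Rightarrow> bool" where
  "Zadd r xs \<longleftrightarrow> (\<exists>a b. xs = [a, b, a + b])"

text \<open>Structure induced on Z by a structure (Zp p, I): an n-ary relation symbol (n, W)
  for each I-definable W \<subseteq> Zp^n, interpreted as Z^n \<inter> W.\<close>

definition induced :: "nat \<Rightarrow> ('r \<Rightarrow> (nat \<Rightarrow> int) list \<Rightarrow> bool)
    \<Rightarrow> (nat \<times> (nat \<Rightarrow> int) list set) \<Rightarrow> int list \<Rightarrow> bool" where
  "induced p I = (\<lambda>(n, W) xs. definable (Zp p) I n W \<and> length xs = n \<and> map (pembed p) xs \<in> W)"

definition expands_Zp :: "nat \<Rightarrow> ('r \<Rightarrow> (nat \<Rightarrow> int) list \<Rightarrow> bool) \<Rightarrow> bool" where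
  "expands_Zp p I \<longleftrightarrow>
     (\<exists>rp rv. (\<forall>xs. set xs \<subseteq> Zp p \<longrightarrow> (I rp xs \<longleftrightarrow> (\<exists>a b. xs = [a, b, padd p a b]))) \<and>
             (\<forall>xs. set xs \<subseteq> Zp p \<longrightarrow> (I rv xs \<longleftrightarrow> (\<exists>a b. xs = [a, b] \<and> pval_le p a b))))"

end

theory Submission
  imports Defs
begin

text \<open>A \<open>(\<int>, +)\<close>-definable set is determined by residues modulo some \<open>M\<close>
  and by which of finitely many affine forms vanish; this survives projection, since a form with
  non-zero coefficient in the eliminated variable either pins that variable down or can be kept
  non-zero by moving it within its residue class. Hence, for \<open>Y \<subseteq> \<int>\<^bsup>1+k\<^esup>\<close>,
  whether \<open>x # a \<in> Y\<close> depends only on a key of \<open>a\<close> taking finitely many values,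
  unless \<open>x\<close> is one of boundedly many roots. In a large pattern the witnesses are injective
  in each index, so pigeonhole and counting give an \<open>m \<times> m\<close> subpattern whose parameters share
  their keys and whose witnesses avoid all roots. There the \<open>Y\<close>-parts are constant, so the
  \<open>X\<close>-parts alone form an ict-pattern, which the embedding \<open>\<int> \<rightarrow> \<int>\<^sub>p\<close>
  carries to \<open>\<int>\<^sub>p\<close>, contradicting its dp-minimality.\<close>

section \<open>Affine forms over \<open>\<int>\<close>\<close>

type_synonym form = "(nat \<Rightarrow> int) \<Rightarrow> int"

inductive affine_form :: "form \<Rightarrow> bool" where
  const: "affine_form (\<lambda>_. c)"
| var: "affine_form (\<lambda>v. v i)"
| add: "affine_form L1 \<Longrightarrow> affine_form L2 \<Longrightarrow> affine_form (\<lambda>v. L1 v + L2 v)"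
| scale: "affine_form L \<Longrightarrow> affine_form (\<lambda>v. c * L v)"

definition affine_coeff :: "form \<Rightarrow> nat \<Rightarrow> int" where
  "affine_coeff L y = L ((\<lambda>_. 0)(y := 1)) - L (\<lambda>_. 0)"

lemma affine_form_upd:
  assumes "affine_form L"
  shows "L (v(y := x)) = affine_coeff L y * x + L (v(y := 0))"
  using assms
proof induction
  case (scale L c)
  then show ?case
    by (simp only: affine_coeff_def) (simp del: fun_upd_apply add: algebra_simps)
qed (auto simp: affine_coeff_def algebra_simps)

lemma affine_form_upd_zero:
  assumes "affine_form L"
  shows "affine_form (\<lambda>v. L (v(y := 0)))"
  using assms
proof induction
  case (var i)
  then show ?case
    by (cases "i = y") (auto intro: affine_form.intros)
qed (auto intro: affine_form.intros)

lemma affine_form_mod_cong: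
  assumes "affine_form L" and "\<And>i. v i mod m = w i mod m"
  shows "L v mod m = L w mod m"
  using assms(1)
  by induction (auto simp: assms(2) intro: mod_add_cong mod_mult_cong)

lemma affine_form_diff:
  "affine_form L1 \<Longrightarrow> affine_form L2 \<Longrightarrow> affine_form (\<lambda>v. L1 v - L2 v)"
  using affine_form.add[OF _ affine_form.scale[of L2 "-1"], of L1] by simp

section \<open>Definable sets of \<open>(\<int>, +)\<close>\<close>

definition invariant_mod_zeros :: "int \<Rightarrow> form list \<Rightarrow> (nat \<Rightarrow> int) set \<Rightarrow> bool" where
  "invariant_mod_zeros M Ls S \<longleftrightarrow>
     (\<forall>v w. (\<forall>i. v i mod M = w i mod M) \<longrightarrow> (\<forall>L\<in>set Ls. L v = 0 \<longleftrightarrow> L w = 0) \<longrightarrow>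
        v \<in> S \<longrightarrow> w \<in> S)"

lemma invariant_mod_zerosD:
  assumes "invariant_mod_zeros M Ls S"
    and "\<And>i. v i mod M = w i mod M" and "\<And>L. L \<in> set Ls \<Longrightarrow> L v = 0 \<longleftrightarrow> L w = 0"
  shows "v \<in> S \<longleftrightarrow> w \<in> S"
  using assms unfolding invariant_mod_zeros_def by metis

text \<open>Every set defined by a quantifier-free formula of \<open>(\<int>, +)\<close> is of this kind.\<close>

definition lin_cong_set :: "(nat \<Rightarrow> int) set \<Rightarrow> bool" where
  "lin_cong_set S \<longleftrightarrow> (\<exists>M Ls. M > 0 \<and> (\<forall>L\<in>set Ls. affine_form L) \<and> invariant_mod_zeros M Ls S)"

lemma lin_cong_set_zeros:
  assumes "affine_form L"
  shows "lin_cong_set {v. L v = 0}"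
  unfolding lin_cong_set_def invariant_mod_zeros_def
  using assms by (intro exI[of _ 1] exI[of _ "[L]"]) auto

lemma lin_cong_set_Compl:
  assumes "lin_cong_set S"
  shows "lin_cong_set (- S)"
proof -
  obtain M Ls where M: "M > 0" and affine: "\<forall>L\<in>set Ls. affine_form L"
    and inv: "invariant_mod_zeros M Ls S"
    using assms unfolding lin_cong_set_def by blast
  have "invariant_mod_zeros M Ls (- S)"
    unfolding invariant_mod_zeros_def
  proof (intro allI impI)
    fix v w
    assume "\<forall>i. v i mod M = w i mod M" "\<forall>L\<in>set Ls. L v = 0 \<longleftrightarrow> L w = 0" "v \<in> - S"
    then show "w \<in> - S"
      using inv[unfolded invariant_mod_zeros_def, rule_format, of w v] by auto
  qed
  then show ?thesis
    unfolding lin_cong_set_def using M affine by blast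
qed

lemma lin_cong_set_Int:
  assumes "lin_cong_set S" and "lin_cong_set T"
  shows "lin_cong_set (S \<inter> T)"
proof -
  obtain M1 Ls1 where 1: "M1 > 0" "\<forall>L\<in>set Ls1. affine_form L" "invariant_mod_zeros M1 Ls1 S"
    using assms(1) unfolding lin_cong_set_def by blast
  obtain M2 Ls2 where 2: "M2 > 0" "\<forall>L\<in>set Ls2. affine_form L" "invariant_mod_zeros M2 Ls2 T"
    using assms(2) unfolding lin_cong_set_def by blast
  have "invariant_mod_zeros (M1 * M2) (Ls1 @ Ls2) (S \<inter> T)"
    unfolding invariant_mod_zeros_def
  proof (intro allI impI)
    fix v w
    assume res: "\<forall>i. v i mod (M1 * M2) = w i mod (M1 * M2)"
      and zeros: "\<forall>L\<in>set (Ls1 @ Ls2). L v = 0 \<longleftrightarrow> L w = 0" and "v \<in> S \<inter> T"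
    have "v i mod M1 = w i mod M1" "v i mod M2 = w i mod M2" for i
      using res by (metis dvd_triv_left dvd_triv_right mod_mod_cancel)+
    then show "w \<in> S \<inter> T"
      using 1(3)[unfolded invariant_mod_zeros_def, rule_format, of v w]
        2(3)[unfolded invariant_mod_zeros_def, rule_format, of v w] zeros \<open>v \<in> S \<inter> T\<close>
      by auto
  qed
  then show ?thesis
    unfolding lin_cong_set_def using 1 2 by (intro exI[of _ "M1 * M2"] exI[of _ "Ls1 @ Ls2"]) auto
qed

definition cross_form :: "nat \<Rightarrow> form \<Rightarrow> form \<Rightarrow> form" where
  "cross_form y L1 L2 v = affine_coeff L1 y * L2 (v(y := 0)) - affine_coeff L2 y * L1 (v(y := 0))"

lemma cross_form_eq:
  assumes "affine_form L1" and "affine_form L2"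
  shows "affine_coeff L1 y * L2 (v(y := x)) = cross_form y L1 L2 v + affine_coeff L2 y * L1 (v(y := x))"
  unfolding cross_form_def affine_form_upd[OF assms(1), of v y x] affine_form_upd[OF assms(2), of v y x]
  by (simp add: algebra_simps)

lemma affine_form_cross_form:
  assumes "affine_form L1" and "affine_form L2"
  shows "affine_form (cross_form y L1 L2)"
  unfolding cross_form_def
  by (intro affine_form_diff affine_form.scale affine_form_upd_zero assms)

text \<open>If a form \<open>L\<^sub>j\<close> with non-zero
  \<open>y\<close>-coefficient vanishes, it determines \<open>y\<close>, and then every \<open>L\<close> vanishes iff
  \<open>cross_form y L\<^sub>j L\<close> does; the coefficients in the modulus ensure that this root of
  \<open>L\<^sub>j\<close> moves by a multiple of \<open>M\<close> when the other variables move within their residue classes.\<close>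

definition elim_modulus :: "int \<Rightarrow> form list \<Rightarrow> nat \<Rightarrow> int" where
  "elim_modulus M Ls y = M * prod_list (map (\<lambda>L. max 1 \<bar>affine_coeff L y\<bar>) Ls)"

definition elim_forms :: "form list \<Rightarrow> nat \<Rightarrow> form list" where
  "elim_forms Ls y = map (\<lambda>L v. L (v(y := 0))) Ls @ [cross_form y L1 L2. L1 \<leftarrow> Ls, L2 \<leftarrow> Ls]"

lemma elim_modulus_pos: "M > 0 \<Longrightarrow> elim_modulus M Ls y > 0"
  unfolding elim_modulus_def by (induction Ls) (auto simp: zero_less_mult_iff)

lemma coeff_modulus_dvd_elim_modulus:
  assumes "L \<in> set Ls" and "affine_coeff L y \<noteq> 0"
  shows "affine_coeff L y * M dvd elim_modulus M Ls y"
proof -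
  have "max 1 \<bar>affine_coeff L y\<bar> = \<bar>affine_coeff L y\<bar>"
    using assms(2) by simp
  then have "\<bar>affine_coeff L y\<bar> \<in> set (map (\<lambda>L. max 1 \<bar>affine_coeff L y\<bar>) Ls)"
    using assms(1) by force
  then have "\<bar>affine_coeff L y\<bar> dvd prod_list (map (\<lambda>L. max 1 \<bar>affine_coeff L y\<bar>) Ls)"
    by (rule prod_list_dvd)
  then show ?thesis
    unfolding elim_modulus_def by (simp add: mult.commute mult_dvd_mono)
qed

lemma affine_forms_elim_forms:
  assumes "\<forall>L\<in>set Ls. affine_form L"
  shows "\<forall>L\<in>set (elim_forms Ls y). affine_form L"
  using assms unfolding elim_forms_def by (auto intro: affine_form_upd_zero affine_form_cross_form)

lemma exists_cong_root:
  fixes g a r r' M :: int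
  assumes "g * a + r = 0" and "g * M dvd r' - r"
  shows "\<exists>b. b mod M = a mod M \<and> g * b + r' = 0"
proof -
  obtain t where t: "r' - r = g * M * t"
    using assms(2) by blast
  have "(a - M * t) mod M = (a + (- t) * M) mod M"
    by (simp add: algebra_simps)
  also have "\<dots> = a mod M"
    by (rule mod_mult_self1)
  finally have "(a - M * t) mod M = a mod M" .
  moreover have "g * (a - M * t) + r' = 0"
    using assms(1) t by (simp add: algebra_simps)
  ultimately show ?thesis by blast
qed

lemma exists_cong_avoiding_roots:
  fixes g r :: "'a \<Rightarrow> int" and a M :: int
  assumes "finite A" and "M > 0"
  shows "\<exists>b. b mod M = a mod M \<and> (\<forall>x\<in>A. g x \<noteq> 0 \<longrightarrow> g x * b + r x \<noteq> 0)"
proof -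
  define B where "B = (\<Sum>x\<in>A. \<bar>r x\<bar>)"
  define b where "b = a + M * (B + \<bar>a\<bar> + 1)"
  have "B \<ge> 0"
    unfolding B_def by (simp add: sum_nonneg)
  then have "M * (B + \<bar>a\<bar> + 1) \<ge> B + \<bar>a\<bar> + 1"
    using assms(2) mult_right_mono[of 1 M "B + \<bar>a\<bar> + 1"] by simp
  then have b_large: "b > B"
    unfolding b_def by linarith
  have "g x * b + r x \<noteq> 0" if "x \<in> A" "g x \<noteq> 0" for x
  proof -
    have "\<bar>r x\<bar> \<le> B"
      unfolding B_def using assms(1) that(1) by (intro member_le_sum) auto
    moreover have "1 \<le> \<bar>g x\<bar>"
      using that(2) by linarith
    then have "\<bar>b\<bar> \<le> \<bar>g x * b\<bar>"
      by (simp add: abs_mult mult_le_cancel_right1)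
    ultimately show ?thesis
      using b_large by linarith
  qed
  moreover have "b mod M = a mod M"
    unfolding b_def by (simp add: mult.commute)
  ultimately show ?thesis by blast
qed


lemma elim_zero_pattern_root:
  assumes affine: "\<forall>L\<in>set Ls. affine_form L"
    and res: "\<forall>i. v i mod elim_modulus M Ls y = w i mod elim_modulus M Ls y"
    and zeros: "\<forall>L\<in>set (elim_forms Ls y). L v = 0 \<longleftrightarrow> L w = 0"
    and Lj: "Lj \<in> set Ls" "affine_coeff Lj y \<noteq> 0" "Lj (v(y := a)) = 0"
  shows "\<exists>b. b mod M = a mod M \<and> (\<forall>L\<in>set Ls. L (v(y := a)) = 0 \<longleftrightarrow> L (w(y := b)) = 0)"
proof -
  let ?g = "affine_coeff Lj y"
  have "affine_form (\<lambda>u. Lj (u(y := 0)))"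
    using affine Lj(1) by (blast intro: affine_form_upd_zero)
  then have "Lj (w(y := 0)) mod elim_modulus M Ls y = Lj (v(y := 0)) mod elim_modulus M Ls y"
    by (rule affine_form_mod_cong) (simp add: res)
  then have "elim_modulus M Ls y dvd Lj (w(y := 0)) - Lj (v(y := 0))"
    by (simp add: mod_eq_dvd_iff)
  then have "?g * M dvd Lj (w(y := 0)) - Lj (v(y := 0))"
    using coeff_modulus_dvd_elim_modulus[OF Lj(1,2)] dvd_trans by blast
  moreover have "?g * a + Lj (v(y := 0)) = 0"
    using Lj(3) affine_form_upd[of Lj v y a] affine Lj(1) by simp
  ultimately obtain b where b: "b mod M = a mod M" "?g * b + Lj (w(y := 0)) = 0"
    using exists_cong_root by blast
  have "Lj (w(y := b)) = 0"
    using b(2) affine_form_upd[of Lj w y b] affine Lj(1) by simp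
  have "L (v(y := a)) = 0 \<longleftrightarrow> L (w(y := b)) = 0" if L: "L \<in> set Ls" for L
  proof -
    have "cross_form y Lj L \<in> set (elim_forms Ls y)"
      using L Lj(1) unfolding elim_forms_def by auto
    then have "cross_form y Lj L v = 0 \<longleftrightarrow> cross_form y Lj L w = 0"
      using zeros by blast
    then have "?g * L (v(y := a)) = 0 \<longleftrightarrow> ?g * L (w(y := b)) = 0"
      using cross_form_eq[of Lj L y] affine L Lj(1,3) \<open>Lj (w(y := b)) = 0\<close> by simp
    then show ?thesis
      using Lj(2) by simp
  qed
  then show ?thesis
    using b(1) by blast
qed

lemma elim_zero_pattern_no_root:
  assumes affine: "\<forall>L\<in>set Ls. affine_form L" and M: "M > 0"
    and zeros: "\<forall>L\<in>set (elim_forms Ls y). L v = 0 \<longleftrightarrow> L w = 0"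
    and no_root: "\<forall>L\<in>set Ls. affine_coeff L y \<noteq> 0 \<longrightarrow> L (v(y := a)) \<noteq> 0"
  shows "\<exists>b. b mod M = a mod M \<and> (\<forall>L\<in>set Ls. L (v(y := a)) = 0 \<longleftrightarrow> L (w(y := b)) = 0)"
proof -
  obtain b where b: "b mod M = a mod M"
    and no_root': "\<forall>L\<in>set Ls. affine_coeff L y \<noteq> 0 \<longrightarrow> affine_coeff L y * b + L (w(y := 0)) \<noteq> 0"
    using exists_cong_avoiding_roots[OF finite_set M,
        where a = a and g = "\<lambda>L. affine_coeff L y" and r = "\<lambda>L. L (w(y := 0))"]
    by blast
  have "L (v(y := a)) = 0 \<longleftrightarrow> L (w(y := b)) = 0" if L: "L \<in> set Ls" for L
  proof (cases "affine_coeff L y = 0")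
    case True
    have "(\<lambda>v. L (v(y := 0))) \<in> set (elim_forms Ls y)"
      using L unfolding elim_forms_def by auto
    then have "L (v(y := 0)) = 0 \<longleftrightarrow> L (w(y := 0)) = 0"
      using zeros by fastforce
    then show ?thesis
      using affine_form_upd[of L v y a] affine_form_upd[of L w y b] affine L True by simp
  next
    case False
    then show ?thesis
      using no_root no_root' affine_form_upd[of L w y b] affine L by auto
  qed
  then show ?thesis
    using b by blast
qed

lemma elim_zero_pattern:
  assumes "\<forall>L\<in>set Ls. affine_form L" and "M > 0"
    and "\<forall>i. v i mod elim_modulus M Ls y = w i mod elim_modulus M Ls y"
    and "\<forall>L\<in>set (elim_forms Ls y). L v = 0 \<longleftrightarrow> L w = 0"
  shows "\<exists>b. b mod M = a mod M \<and> (\<forall>L\<in>set Ls. L (v(y := a)) = 0 \<longleftrightarrow> L (w(y := b)) = 0)"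
proof (cases "\<exists>Lj\<in>set Ls. affine_coeff Lj y \<noteq> 0 \<and> Lj (v(y := a)) = 0")
  case True
  then obtain Lj where "Lj \<in> set Ls" "affine_coeff Lj y \<noteq> 0" "Lj (v(y := a)) = 0"
    by blast
  then show ?thesis
    by (rule elim_zero_pattern_root[OF assms(1,3,4)])
next
  case False
  then have "\<forall>L\<in>set Ls. affine_coeff L y \<noteq> 0 \<longrightarrow> L (v(y := a)) \<noteq> 0"
    by blast
  then show ?thesis
    by (rule elim_zero_pattern_no_root[OF assms(1,2,4)])
qed

lemma lin_cong_set_project:
  assumes "lin_cong_set S"
  shows "lin_cong_set {v. \<exists>a. v(y := a) \<in> S}"
proof -
  obtain M Ls where M: "M > 0" and affine: "\<forall>L\<in>set Ls. affine_form L"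
    and inv: "invariant_mod_zeros M Ls S"
    using assms unfolding lin_cong_set_def by blast
  have "invariant_mod_zeros (elim_modulus M Ls y) (elim_forms Ls y) {v. \<exists>a. v(y := a) \<in> S}"
    unfolding invariant_mod_zeros_def
  proof (intro allI impI)
    fix v w
    assume res: "\<forall>i. v i mod elim_modulus M Ls y = w i mod elim_modulus M Ls y"
      and zeros: "\<forall>L\<in>set (elim_forms Ls y). L v = 0 \<longleftrightarrow> L w = 0"
      and "v \<in> {v. \<exists>a. v(y := a) \<in> S}"
    then obtain a where a: "v(y := a) \<in> S"
      by blast
    obtain b where b: "b mod M = a mod M"
      and same_zeros: "\<forall>L\<in>set Ls. L (v(y := a)) = 0 \<longleftrightarrow> L (w(y := b)) = 0"
      using elim_zero_pattern[OF affine M res zeros] by blast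
    have "M dvd elim_modulus M Ls y"
      unfolding elim_modulus_def by simp
    then have "v i mod M = w i mod M" for i
      using res by (metis mod_mod_cancel)
    then have "\<forall>i. (v(y := a)) i mod M = (w(y := b)) i mod M"
      using b by simp
    then have "w(y := b) \<in> S"
      using inv a same_zeros unfolding invariant_mod_zeros_def by blast
    then show "w \<in> {v. \<exists>a. v(y := a) \<in> S}"
      by blast
  qed
  then show ?thesis
    unfolding lin_cong_set_def
    using elim_modulus_pos[OF M] affine_forms_elim_forms[OF affine] by blast
qed


lemma Zadd_iff: "Zadd r xs \<longleftrightarrow> length xs = 3 \<and> xs ! 2 = xs ! 0 + xs ! 1"
  by (auto simp: Zadd_def numeral_3_eq_3 length_Suc_conv)

lemma lin_cong_set_sat_Zadd: "lin_cong_set {v. sat (UNIV :: int set) Zadd \<phi> v}"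
proof (induction \<phi>)
  case (Eq i j)
  have "{v. sat (UNIV :: int set) Zadd (Eq i j) v} = {v. v i - v j = 0}"
    by simp
  then show ?case
    using lin_cong_set_zeros[OF affine_form_diff[OF affine_form.var affine_form.var]] by simp
next
  case (Rel r "is")
  show ?case
  proof (cases "length is = 3")
    case True
    have "{v. sat (UNIV :: int set) Zadd (Rel r is) v} = {v. v (is ! 0) + v (is ! 1) - v (is ! 2) = 0}"
      using True by (auto simp: Zadd_iff)
    moreover have "affine_form (\<lambda>v. v (is ! 0) + v (is ! 1) - v (is ! 2))"
      by (intro affine_form_diff affine_form.add affine_form.var)
    ultimately show ?thesis
      by (simp only: lin_cong_set_zeros)
  next
    case False
    then have "{v. sat (UNIV :: int set) Zadd (Rel r is) v} = {v. (1 :: int) = 0}"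
      by (simp add: Zadd_iff)
    then show ?thesis
      by (simp only: lin_cong_set_zeros[OF affine_form.const])
  qed
next
  case (Neg \<phi>)
  have "{v. sat (UNIV :: int set) Zadd (Neg \<phi>) v} = - {v. sat UNIV Zadd \<phi> v}"
    by auto
  then show ?case
    using lin_cong_set_Compl[OF Neg] by simp
next
  case (Conj \<phi> \<psi>)
  then show ?case
    using lin_cong_set_Int by (simp add: Collect_conj_eq)
next
  case (Ex i \<phi>)
  then show ?case
    using lin_cong_set_project[of "{v. sat UNIV Zadd \<phi> v}" i] by simp
qed

section \<open>Uniform fibres of \<open>(\<int>, +)\<close>-definable sets\<close>

definition list_valuation :: "(nat \<Rightarrow> 'a) \<Rightarrow> 'a list \<Rightarrow> nat \<Rightarrow> 'a" where
  "list_valuation ps xs = (\<lambda>i. if i < length xs then xs ! i else ps i)"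

lemma affine_form_list_valuation_Cons:
  assumes "affine_form L"
  shows "L (list_valuation ps (x # a)) = affine_coeff L 0 * x + L (list_valuation ps (0 # a))"
proof -
  have "list_valuation ps (x # a) = (list_valuation ps (0 # a))(0 := x)"
    "list_valuation ps (0 # a) = (list_valuation ps (0 # a))(0 := 0)"
    by (auto simp: list_valuation_def)
  then show ?thesis
    using affine_form_upd[OF assms] by metis
qed

lemma finite_card_roots:
  fixes g r :: "'a \<Rightarrow> int"
  shows "finite {x. \<exists>L\<in>set Ls. g L \<noteq> 0 \<and> g L * x + r L = 0}"
    and "card {x. \<exists>L\<in>set Ls. g L \<noteq> 0 \<and> g L * x + r L = 0} \<le> length Ls"
proof -
  have sub: "{x. \<exists>L\<in>set Ls. g L \<noteq> 0 \<and> g L * x + r L = 0} \<subseteq> (\<lambda>L. - r L div g L) ` set Ls"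
  proof
    fix x
    assume "x \<in> {x. \<exists>L\<in>set Ls. g L \<noteq> 0 \<and> g L * x + r L = 0}"
    then obtain L where L: "L \<in> set Ls" "g L \<noteq> 0" "- r L = g L * x"
      by auto
    then have "x = - r L div g L"
      by simp
    with L(1) show "x \<in> (\<lambda>L. - r L div g L) ` set Ls"
      by blast
  qed
  then show "finite {x. \<exists>L\<in>set Ls. g L \<noteq> 0 \<and> g L * x + r L = 0}"
    using finite_subset by blast
  have "card {x. \<exists>L\<in>set Ls. g L \<noteq> 0 \<and> g L * x + r L = 0} \<le> card ((\<lambda>L. - r L div g L) ` set Ls)"
    using sub by (intro card_mono) auto
  also have "\<dots> \<le> length Ls"
    using card_image_le card_length le_trans by blast
  finally show "card {x. \<exists>L\<in>set Ls. g L \<noteq> 0 \<and> g L * x + r L = 0} \<le> length Ls" .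
qed

definition fibre_uniform ::
    "'a list set \<Rightarrow> 'a list set \<Rightarrow> ('a list \<Rightarrow> 'k) \<Rightarrow> ('a \<Rightarrow> 'a list \<Rightarrow> bool) \<Rightarrow> nat \<Rightarrow> bool" where
  "fibre_uniform Y A key bad d \<longleftrightarrow> finite (key ` A) \<and>
     (\<forall>a. finite {x. bad x a} \<and> card {x. bad x a} \<le> d) \<and>
     (\<forall>x a a'. a \<in> A \<longrightarrow> a' \<in> A \<longrightarrow> key a = key a' \<longrightarrow> \<not> bad x a \<longrightarrow> \<not> bad x a' \<longrightarrow>
        (x # a \<in> Y \<longleftrightarrow> x # a' \<in> Y))"

lemma fibre_uniformD:
  assumes "fibre_uniform Y A key bad d"
  shows "finite {x. bad x a}" and "card {x. bad x a} \<le> d"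
    and "a \<in> A \<Longrightarrow> a' \<in> A \<Longrightarrow> key a = key a' \<Longrightarrow> \<not> bad x a \<Longrightarrow> \<not> bad x a' \<Longrightarrow>
      x # a \<in> Y \<longleftrightarrow> x # a' \<in> Y"
  using assms unfolding fibre_uniform_def by blast+

lemma invariant_mod_zeros_Cons_iff:
  assumes affine: "\<forall>L\<in>set Ls. affine_form L" and inv: "invariant_mod_zeros M Ls S"
    and length: "length a' = length a" and residues: "map (\<lambda>x. x mod M) a = map (\<lambda>x. x mod M) a'"
    and zeros: "\<forall>L\<in>set Ls. L (list_valuation ps (0 # a)) = 0 \<longleftrightarrow> L (list_valuation ps (0 # a')) = 0"
    and no_root: "\<forall>L\<in>set Ls. affine_coeff L 0 \<noteq> 0 \<longrightarrow>
      L (list_valuation ps (x # a)) \<noteq> 0 \<and> L (list_valuation ps (x # a')) \<noteq> 0"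
  shows "list_valuation ps (x # a) \<in> S \<longleftrightarrow> list_valuation ps (x # a') \<in> S"
  using inv
proof (rule invariant_mod_zerosD)
  show "list_valuation ps (x # a) i mod M = list_valuation ps (x # a') i mod M" for i
    using length residues nth_map[of _ a "\<lambda>x. x mod M"] nth_map[of _ a' "\<lambda>x. x mod M"]
    by (cases i) (auto simp: list_valuation_def)
  show "L (list_valuation ps (x # a)) = 0 \<longleftrightarrow> L (list_valuation ps (x # a')) = 0"
    if L: "L \<in> set Ls" for L
  proof (cases "affine_coeff L 0 = 0")
    case True
    then show ?thesis
      using affine_form_list_valuation_Cons[of L ps x a] affine_form_list_valuation_Cons[of L ps x a']
        affine zeros L by simp
  next
    case False
    then show ?thesis
      using no_root L by blast
  qed
qed

lemma invariant_mod_zeros_fibre_uniform: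
  assumes M: "M > 0" and affine: "\<forall>L\<in>set Ls. affine_form L" and inv: "invariant_mod_zeros M Ls S"
  shows "fibre_uniform {xs. length xs = Suc k \<and> list_valuation ps xs \<in> S} {a. length a = k}
     (\<lambda>a. (map (\<lambda>x. x mod M) a, map (\<lambda>L. L (list_valuation ps (0 # a)) = 0) Ls))
     (\<lambda>x a. \<exists>L\<in>set Ls. affine_coeff L 0 \<noteq> 0 \<and> affine_coeff L 0 * x + L (list_valuation ps (0 # a)) = 0)
     (length Ls)"
  (is "fibre_uniform ?Y ?A ?key ?bad _")
proof -
  have "?key ` ?A \<subseteq> {xs. set xs \<subseteq> {0..<M} \<and> length xs = k} \<times> {bs. set bs \<subseteq> UNIV \<and> length bs = length Ls}"
    using M by auto
  then have "finite (?key ` ?A)"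
    by (rule finite_subset) (intro finite_cartesian_product finite_lists_length_eq; simp)
  moreover have "x # a \<in> ?Y \<longleftrightarrow> x # a' \<in> ?Y"
    if "a \<in> ?A" "a' \<in> ?A" "?key a = ?key a'" "\<not> ?bad x a" "\<not> ?bad x a'" for x a a'
  proof -
    have "\<forall>L\<in>set Ls. affine_coeff L 0 \<noteq> 0 \<longrightarrow>
        L (list_valuation ps (x # a)) \<noteq> 0 \<and> L (list_valuation ps (x # a')) \<noteq> 0"
      using that(4,5) affine affine_form_list_valuation_Cons[of _ ps x a]
        affine_form_list_valuation_Cons[of _ ps x a'] by auto
    moreover have "length a' = length a" "map (\<lambda>x. x mod M) a = map (\<lambda>x. x mod M) a'"
      "\<forall>L\<in>set Ls. L (list_valuation ps (0 # a)) = 0 \<longleftrightarrow> L (list_valuation ps (0 # a')) = 0"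
      using that(1-3) by simp_all
    ultimately have "list_valuation ps (x # a) \<in> S \<longleftrightarrow> list_valuation ps (x # a') \<in> S"
      using invariant_mod_zeros_Cons_iff[OF affine inv] by blast
    then show ?thesis
      using that(1,2) by simp
  qed
  moreover have "finite {x. ?bad x a} \<and> card {x. ?bad x a} \<le> length Ls" for a
    using finite_card_roots[where g = "\<lambda>L. affine_coeff L 0" and r = "\<lambda>L. L (list_valuation ps (0 # a))"]
    by simp
  ultimately show ?thesis
    unfolding fibre_uniform_def by blast
qed

lemma Zadd_definable_fibre_uniform:
  assumes "definable (UNIV :: int set) Zadd (Suc k) Y"
  shows "\<exists>(key :: int list \<Rightarrow> int list \<times> bool list) bad d. fibre_uniform Y {a. length a = k} key bad d"
proof -
  obtain \<phi> ps where Y: "Y = {xs. length xs = Suc k \<and> sat UNIV Zadd \<phi> (\<lambda>i. if i < Suc k then xs ! i else ps i)}"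
    using assms unfolding definable_def by auto
  then have "Y = {xs. length xs = Suc k \<and> list_valuation ps xs \<in> {v. sat UNIV Zadd \<phi> v}}"
    by (auto simp: list_valuation_def)
  moreover obtain M Ls where "M > 0" "\<forall>L\<in>set Ls. affine_form L" "invariant_mod_zeros M Ls {v. sat UNIV Zadd \<phi> v}"
    using lin_cong_set_sat_Zadd unfolding lin_cong_set_def by blast
  ultimately show ?thesis
    using invariant_mod_zeros_fibre_uniform by blast
qed

section \<open>ict-patterns as arrays\<close>

lemma grid_choice:
  "(\<forall>i<N. \<forall>j<N. \<exists>c\<in>C. P i j c) \<longleftrightarrow>
     (\<exists>c. (\<forall>i<N. \<forall>j<N. c i j \<in> C) \<and> (\<forall>i<N. \<forall>j<N. P i j (c i j)))"
proof
  assume ex: "\<forall>i<N. \<forall>j<N. \<exists>c\<in>C. P i j c"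
  define c where "c i j = (SOME c. c \<in> C \<and> P i j c)" for i j
  have "c i j \<in> C \<and> P i j (c i j)" if "i < N" "j < N" for i j
    unfolding c_def using someI_ex[of "\<lambda>c. c \<in> C \<and> P i j c"] ex that by blast
  then show "\<exists>c. (\<forall>i<N. \<forall>j<N. c i j \<in> C) \<and> (\<forall>i<N. \<forall>j<N. P i j (c i j))"
    by blast
next
  assume "\<exists>c. (\<forall>i<N. \<forall>j<N. c i j \<in> C) \<and> (\<forall>i<N. \<forall>j<N. P i j (c i j))"
  then show "\<forall>i<N. \<forall>j<N. \<exists>c\<in>C. P i j c"
    by blast
qed

text \<open>An ict-pattern of depth 2 with rows \<open>I\<close>, columns \<open>J\<close> and the witnesses
  \<open>c i j\<close> made explicit, so that it restricts to any subsets of rows and columns.\<close>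

definition ict_array ::
    "'a list set \<Rightarrow> 'a list set \<Rightarrow> (nat \<Rightarrow> 'a list) \<Rightarrow> (nat \<Rightarrow> 'a list) \<Rightarrow> (nat \<Rightarrow> nat \<Rightarrow> 'a)
      \<Rightarrow> nat set \<Rightarrow> nat set \<Rightarrow> bool" where
  "ict_array \<Phi> \<Psi> a b c I J \<longleftrightarrow>
     (\<forall>i\<in>I. \<forall>j\<in>J. (\<forall>i'\<in>I. c i j # a i' \<in> \<Phi> \<longleftrightarrow> i' = i) \<and> (\<forall>j'\<in>J. c i j # b j' \<in> \<Psi> \<longleftrightarrow> j' = j))"

lemma dp_minimal_iff_ict_array:
  "dp_minimal M I \<longleftrightarrow>
     \<not> (\<exists>k l \<Phi> \<Psi>. definable M I (Suc k) \<Phi> \<and> definable M I (Suc l) \<Psi> \<and>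
         (\<forall>N. \<exists>a b c. (\<forall>i<N. a i \<in> tuples M k) \<and> (\<forall>j<N. b j \<in> tuples M l) \<and>
            (\<forall>i<N. \<forall>j<N. c i j \<in> M) \<and> ict_array \<Phi> \<Psi> a b c {..<N} {..<N}))"
proof -
  have array_iff: "ict_array \<Phi> \<Psi> a b c {..<N} {..<N} \<longleftrightarrow>
      (\<forall>i<N. \<forall>j<N. (\<forall>i'<N. c i j # a i' \<in> \<Phi> \<longleftrightarrow> i' = i) \<and> (\<forall>j'<N. c i j # b j' \<in> \<Psi> \<longleftrightarrow> j' = j))"
    for \<Phi> \<Psi> a b c N
    unfolding ict_array_def Ball_def lessThan_iff ..
  show ?thesis
    unfolding dp_minimal_def grid_choice array_iff by simp
qed

lemma ict_array_mono:
  assumes "ict_array \<Phi> \<Psi> a b c I J" and "I' \<subseteq> I" and "J' \<subseteq> J"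
  shows "ict_array \<Phi> \<Psi> a b c I' J'"
  using assms unfolding ict_array_def by blast

lemma ict_array_inj_row:
  assumes "ict_array \<Phi> \<Psi> a b c I J" and "i \<in> I"
  shows "inj_on (c i) J"
proof (rule inj_onI)
  fix j j'
  assume j: "j \<in> J" "j' \<in> J" and eq: "c i j = c i j'"
  have "c i j # b j \<in> \<Psi>" and "c i j' # b j \<in> \<Psi> \<longleftrightarrow> j = j'"
    using assms j unfolding ict_array_def by blast+
  then show "j = j'"
    using eq by simp
qed

lemma ict_array_inj_column:
  assumes "ict_array \<Phi> \<Psi> a b c I J" and "j \<in> J"
  shows "inj_on (\<lambda>i. c i j) I"
proof (rule inj_onI)
  fix i i'
  assume i: "i \<in> I" "i' \<in> I" and eq: "c i j = c i' j"
  have "c i j # a i \<in> \<Phi>" and "c i' j # a i \<in> \<Phi> \<longleftrightarrow> i = i'"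
    using assms i unfolding ict_array_def by blast+
  then show "i = i'"
    using eq by simp
qed

lemma ict_array_card_row_preimage:
  assumes "ict_array \<Phi> \<Psi> a b c I J" and "i \<in> I" and "finite B"
  shows "card {j. j \<in> J \<and> c i j \<in> B} \<le> card B"
proof -
  have "{j. j \<in> J \<and> c i j \<in> B} = c i -` B \<inter> J"
    by auto
  then show ?thesis
    using card_vimage_inj_on_le[OF ict_array_inj_row[OF assms(1,2)] assms(3)] by simp
qed

lemma ict_array_card_column_preimage:
  assumes "ict_array \<Phi> \<Psi> a b c I J" and "j \<in> J" and "finite B"
  shows "card {i. i \<in> I \<and> c i j \<in> B} \<le> card B"
proof -
  have "{i. i \<in> I \<and> c i j \<in> B} = (\<lambda>i. c i j) -` B \<inter> I"
    by auto
  then show ?thesis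
    using card_vimage_inj_on_le[OF ict_array_inj_column[OF assms(1,2)] assms(3)] by simp
qed

lemma ict_array_reindex:
  assumes "ict_array \<Phi> \<Psi> a b c I J" and "bij_betw f I' I" and "bij_betw g J' J"
  shows "ict_array \<Phi> \<Psi> (a \<circ> f) (b \<circ> g) (\<lambda>i j. c (f i) (g j)) I' J'"
  unfolding ict_array_def
proof (intro ballI conjI)
  fix i j
  assume "i \<in> I'" "j \<in> J'"
  then have ij: "f i \<in> I" "g j \<in> J"
    using assms(2,3) by (auto dest: bij_betwE)
  show "c (f i) (g j) # (a \<circ> f) i' \<in> \<Phi> \<longleftrightarrow> i' = i" if "i' \<in> I'" for i'
  proof -
    have "f i' \<in> I"
      using assms(2) that by (auto dest: bij_betwE)
    then have "c (f i) (g j) # a (f i') \<in> \<Phi> \<longleftrightarrow> f i' = f i"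
      using assms(1) ij unfolding ict_array_def by blast
    also have "\<dots> \<longleftrightarrow> i' = i"
      using assms(2) that \<open>i \<in> I'\<close> unfolding bij_betw_def inj_on_def by blast
    finally show ?thesis
      by simp
  qed
  show "c (f i) (g j) # (b \<circ> g) j' \<in> \<Psi> \<longleftrightarrow> j' = j" if "j' \<in> J'" for j'
  proof -
    have "g j' \<in> J"
      using assms(3) that by (auto dest: bij_betwE)
    then have "c (f i) (g j) # b (g j') \<in> \<Psi> \<longleftrightarrow> g j' = g j"
      using assms(1) ij unfolding ict_array_def by blast
    also have "\<dots> \<longleftrightarrow> j' = j"
      using assms(3) that \<open>j \<in> J'\<close> unfolding bij_betw_def inj_on_def by blast
    finally show ?thesis
      by simp
  qed
qed

lemma ict_array_map:
  assumes "ict_array {xs. map e xs \<in> X1} {xs. map e xs \<in> X2} a b c I J"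
  shows "ict_array X1 X2 (\<lambda>i. map e (a i)) (\<lambda>j. map e (b j)) (\<lambda>i j. e (c i j)) I J"
  using assms unfolding ict_array_def by simp

lemma ict_array_Int_drop:
  assumes "ict_array (Y1 \<inter> Z1) (Y2 \<inter> Z2) a b c I J"
    and "\<And>i i' j. i \<in> I \<Longrightarrow> i' \<in> I \<Longrightarrow> j \<in> J \<Longrightarrow> c i j # a i' \<in> Y1 \<longleftrightarrow> c i j # a i \<in> Y1"
    and "\<And>i j j'. i \<in> I \<Longrightarrow> j \<in> J \<Longrightarrow> j' \<in> J \<Longrightarrow> c i j # b j' \<in> Y2 \<longleftrightarrow> c i j # b j \<in> Y2"
  shows "ict_array Z1 Z2 a b c I J"
  unfolding ict_array_def
proof (intro ballI conjI)
  fix i j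
  assume ij: "i \<in> I" "j \<in> J"
  have row: "c i j # a i' \<in> Y1 \<inter> Z1 \<longleftrightarrow> i' = i" if "i' \<in> I" for i'
    using assms(1) ij that unfolding ict_array_def by blast
  have col: "c i j # b j' \<in> Y2 \<inter> Z2 \<longleftrightarrow> j' = j" if "j' \<in> J" for j'
    using assms(1) ij that unfolding ict_array_def by blast
  show "c i j # a i' \<in> Z1 \<longleftrightarrow> i' = i" if "i' \<in> I" for i'
    using row[OF that] row[OF ij(1)] assms(2)[OF ij(1) that ij(2)] by blast
  show "c i j # b j' \<in> Z2 \<longleftrightarrow> j' = j" if "j' \<in> J" for j'
    using col[OF that] col[OF ij(2)] assms(3)[OF ij(1,2) that] by blast
qed

section \<open>Extracting a uniform subarray\<close>

lemma exists_large_fibre: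
  assumes "finite T" and "f ` D \<subseteq> T" and "finite D" and "D \<noteq> {}" and "card T * P \<le> card D"
  shows "\<exists>y. P \<le> card {x\<in>D. f x = y}"
proof (rule ccontr)
  assume "\<nexists>y. P \<le> card {x\<in>D. f x = y}"
  then have fibre_lt: "card {x\<in>D. f x = y} < P" for y
    by (simp add: not_le)
  then have "P > 0"
    by (metis gr_zeroI not_less0)
  have small: "card {x\<in>D. f x = y} \<le> P - 1" for y
    using fibre_lt[of y] by linarith
  have "D = (\<Union>y\<in>T. {x\<in>D. f x = y})"
    using assms(2) by auto
  then have "card D \<le> (\<Sum>y\<in>T. card {x\<in>D. f x = y})"
    using card_UN_le[OF assms(1), of "\<lambda>y. {x\<in>D. f x = y}"] by simp
  also have "\<dots> \<le> card T * (P - 1)"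
    using sum_bounded_above[of T "\<lambda>y. card {x\<in>D. f x = y}" "P - 1"] small by simp
  also have "\<dots> < card T * P"
    using assms(1-4) \<open>P > 0\<close> by (simp add: card_gt_0_iff) blast
  finally show False
    using assms(5) by simp
qed

lemma obtain_subset_avoiding:
  assumes "finite B" and "card B + n \<le> card A"
  obtains C where "C \<subseteq> A - B" and "card C = n" and "finite C"
proof -
  have "n \<le> card (A - B)"
    using diff_card_le_card_Diff[OF assms(1), of A] assms(2) by linarith
  then show thesis
    using obtain_subset_with_card_n that by metis
qed

lemma card_pair_preimages_le:
  fixes N :: nat
  assumes "finite K" and "\<forall>k\<in>K. \<forall>k'\<in>K. card {x. x < N \<and> B k k' x} \<le> d"
  shows "finite (\<Union>p\<in>K \<times> K. {x. x < N \<and> B (fst p) (snd p) x})"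
    and "card (\<Union>p\<in>K \<times> K. {x. x < N \<and> B (fst p) (snd p) x}) \<le> card K * card K * d"
proof -
  have "finite {x. x < N \<and> B k k' x}" for k k'
    by (rule finite_subset[of _ "{..<N}"]) auto
  then show "finite (\<Union>p\<in>K \<times> K. {x. x < N \<and> B (fst p) (snd p) x})"
    by (intro finite_UN_I finite_cartesian_product assms(1))
  have "card (\<Union>p\<in>K \<times> K. {x. x < N \<and> B (fst p) (snd p) x})
      \<le> (\<Sum>p\<in>K \<times> K. card {x. x < N \<and> B (fst p) (snd p) x})"
    using assms(1) by (intro card_UN_le) simp
  also have "\<dots> \<le> card (K \<times> K) * d"
    using sum_bounded_above[of "K \<times> K" "\<lambda>p. card {x. x < N \<and> B (fst p) (snd p) x}" d] assms(2)
    by fastforce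
  finally show "card (\<Union>p\<in>K \<times> K. {x. x < N \<and> B (fst p) (snd p) x}) \<le> card K * card K * d"
    by (simp add: card_cartesian_product)
qed

text \<open>Choose \<open>s\<close> rows in one fibre of \<open>f\<close>; a fibre of \<open>g\<close> of size \<open>P\<close> keeps
  \<open>m\<close> columns after discarding the at most \<open>s\<^sup>2 dc\<close> columns bad for a pair of
  these rows, and the \<open>s\<close> rows keep \<open>m\<close> after discarding the at most \<open>m\<^sup>2 dr\<close>
  rows bad for a pair of the chosen columns.\<close>

lemma grid_selection:
  fixes f :: "nat \<Rightarrow> 'a" and g :: "nat \<Rightarrow> 'b" and m dc dr :: nat
  assumes S: "finite S" "f ` {..<N} \<subseteq> S" and T: "finite T" "g ` {..<N} \<subseteq> T"
    and col_bad_bound: "\<And>i i'. i < N \<Longrightarrow> i' < N \<Longrightarrow> card {j. j < N \<and> col_bad i i' j} \<le> dc"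
    and row_bad_bound: "\<And>j j'. j < N \<Longrightarrow> j' < N \<Longrightarrow> card {i. i < N \<and> row_bad j j' i} \<le> dr"
  defines "s \<equiv> m + m * m * dr"
  defines "P \<equiv> m + s + s * s * dc + 1"
  assumes N: "N = P * (card S + card T + 1)"
  shows "\<exists>I J. I \<subseteq> {..<N} \<and> J \<subseteq> {..<N} \<and> card I = m \<and> card J = m \<and>
     (\<forall>i\<in>I. \<forall>i'\<in>I. f i = f i') \<and> (\<forall>j\<in>J. \<forall>j'\<in>J. g j = g j') \<and>
     (\<forall>i\<in>I. \<forall>i'\<in>I. \<forall>j\<in>J. \<not> col_bad i i' j) \<and> (\<forall>j\<in>J. \<forall>j'\<in>J. \<forall>i\<in>I. \<not> row_bad j j' i)"
proof -
  have nonempty: "{..<N} \<noteq> {}"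
    using N unfolding P_def by auto
  have "card S * P \<le> card {..<N}" "card T * P \<le> card {..<N}"
    unfolding N card_lessThan by (simp_all add: mult.commute[of _ P] add_mult_distrib2)
  then obtain u w where u: "P \<le> card {i\<in>{..<N}. f i = u}" and w: "P \<le> card {j\<in>{..<N}. g j = w}"
    using exists_large_fibre[OF S finite_lessThan nonempty] exists_large_fibre[OF T finite_lessThan nonempty]
    by blast
  have "s \<le> card {i\<in>{..<N}. f i = u}"
    using u unfolding P_def by linarith
  then obtain I0 where I0: "I0 \<subseteq> {i\<in>{..<N}. f i = u}" "card I0 = s" "finite I0"
    by (rule obtain_subset_with_card_n)
  define bad_columns where "bad_columns = (\<Union>p\<in>I0 \<times> I0. {j. j < N \<and> col_bad (fst p) (snd p) j})"
  have "\<forall>i\<in>I0. \<forall>i'\<in>I0. card {j. j < N \<and> col_bad i i' j} \<le> dc"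
    using I0(1) by (auto intro!: col_bad_bound)
  note bad_columns = card_pair_preimages_le[OF I0(3) this, folded bad_columns_def, unfolded I0(2)]
  have "card bad_columns + m \<le> card {j\<in>{..<N}. g j = w}"
    using bad_columns(2) w unfolding P_def by linarith
  then obtain J where J: "J \<subseteq> {j\<in>{..<N}. g j = w} - bad_columns" "card J = m" "finite J"
    by (rule obtain_subset_avoiding[OF bad_columns(1)])
  define bad_rows where "bad_rows = (\<Union>p\<in>J \<times> J. {i. i < N \<and> row_bad (fst p) (snd p) i})"
  have "\<forall>j\<in>J. \<forall>j'\<in>J. card {i. i < N \<and> row_bad j j' i} \<le> dr"
    using J(1) by (auto intro!: row_bad_bound)
  note bad_rows = card_pair_preimages_le[OF J(3) this, folded bad_rows_def, unfolded J(2)]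
  have "card bad_rows + m \<le> card I0"
    using bad_rows(2) I0(2) unfolding s_def by linarith
  then obtain I where I: "I \<subseteq> I0 - bad_rows" "card I = m"
    by (rule obtain_subset_avoiding[OF bad_rows(1)])
  have col_good: "\<not> col_bad i i' j" if "i \<in> I" "i' \<in> I" "j \<in> J" for i i' j
  proof
    assume "col_bad i i' j"
    with that I(1) J(1) have "j \<in> bad_columns"
      unfolding bad_columns_def by (intro UN_I[of "(i, i')"]) auto
    with that(3) J(1) show False
      by blast
  qed
  have row_good: "\<not> row_bad j j' i" if "j \<in> J" "j' \<in> J" "i \<in> I" for j j' i
  proof
    assume "row_bad j j' i"
    with that I(1) I0(1) J(1) have "i \<in> bad_rows"
      unfolding bad_rows_def by (intro UN_I[of "(j, j')"]) auto
    with that(3) I(1) show False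
      by blast
  qed
  have "I \<subseteq> {..<N} \<and> J \<subseteq> {..<N} \<and> card I = m \<and> card J = m \<and>
     (\<forall>i\<in>I. \<forall>i'\<in>I. f i = f i') \<and> (\<forall>j\<in>J. \<forall>j'\<in>J. g j = g j') \<and>
     (\<forall>i\<in>I. \<forall>i'\<in>I. \<forall>j\<in>J. \<not> col_bad i i' j) \<and> (\<forall>j\<in>J. \<forall>j'\<in>J. \<forall>i\<in>I. \<not> row_bad j j' i)"
    using I I0(1) J col_good row_good by (simp add: subset_iff)
  then show ?thesis
    by (rule exI[of _ I, OF exI[of _ J]])
qed

lemma ict_array_Int_drop_fibre_uniform:
  assumes Y1: "fibre_uniform Y1 A1 key1 bad1 d1" and Y2: "fibre_uniform Y2 A2 key2 bad2 d2"
    and array: "ict_array (Y1 \<inter> Z1) (Y2 \<inter> Z2) a b c I J"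
    and a: "a ` I \<subseteq> A1" and b: "b ` J \<subseteq> A2"
    and keys: "\<forall>i\<in>I. \<forall>i'\<in>I. key1 (a i) = key1 (a i')" "\<forall>j\<in>J. \<forall>j'\<in>J. key2 (b j) = key2 (b j')"
    and good: "\<forall>i\<in>I. \<forall>i'\<in>I. \<forall>j\<in>J. \<not> bad1 (c i j) (a i')"
      "\<forall>j\<in>J. \<forall>j'\<in>J. \<forall>i\<in>I. \<not> bad2 (c i j) (b j')"
  shows "ict_array Z1 Z2 a b c I J"
proof (rule ict_array_Int_drop[OF array])
  show "c i j # a i' \<in> Y1 \<longleftrightarrow> c i j # a i \<in> Y1" if "i \<in> I" "i' \<in> I" "j \<in> J" for i i' j
  proof (rule fibre_uniformD(3)[OF Y1])
    show "a i' \<in> A1" "a i \<in> A1"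
      using a that by auto
    show "key1 (a i') = key1 (a i)"
      using keys(1) that by blast
    show "\<not> bad1 (c i j) (a i')" "\<not> bad1 (c i j) (a i)"
      using good(1) that by blast+
  qed
  show "c i j # b j' \<in> Y2 \<longleftrightarrow> c i j # b j \<in> Y2" if "i \<in> I" "j \<in> J" "j' \<in> J" for i j j'
  proof (rule fibre_uniformD(3)[OF Y2])
    show "b j' \<in> A2" "b j \<in> A2"
      using b that by auto
    show "key2 (b j') = key2 (b j)"
      using keys(2) that by blast
    show "\<not> bad2 (c i j) (b j')" "\<not> bad2 (c i j) (b j)"
      using good(2) that by blast+
  qed
qed

lemma ict_arrays_drop_fibre_uniform:
  fixes key1 :: "'a list \<Rightarrow> 'k1" and key2 :: "'a list \<Rightarrow> 'k2"
  assumes Y1: "fibre_uniform Y1 A1 key1 bad1 d1" and Y2: "fibre_uniform Y2 A2 key2 bad2 d2"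
    and arrays: "\<And>N. \<exists>a b c. (\<forall>i<N. a i \<in> A1) \<and> (\<forall>j<N. b j \<in> A2) \<and> (\<forall>i<N. \<forall>j<N. c i j \<in> C) \<and>
        ict_array (Y1 \<inter> Z1) (Y2 \<inter> Z2) a b c {..<N} {..<N}"
  shows "\<exists>a b c. (\<forall>i<m. a i \<in> A1) \<and> (\<forall>j<m. b j \<in> A2) \<and> (\<forall>i<m. \<forall>j<m. c i j \<in> C) \<and>
        ict_array Z1 Z2 a b c {..<m} {..<m}"
proof -
  define s where "s = m + m * m * d2"
  define N where "N = (m + s + s * s * d1 + 1) * (card (key1 ` A1) + card (key2 ` A2) + 1)"
  obtain a b c where a: "\<forall>i<N. a i \<in> A1" and b: "\<forall>j<N. b j \<in> A2" and c: "\<forall>i<N. \<forall>j<N. c i j \<in> C"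
    and array: "ict_array (Y1 \<inter> Z1) (Y2 \<inter> Z2) a b c {..<N} {..<N}"
    using arrays[of N] by blast
  have bad_columns: "card {j. j < N \<and> bad1 (c i j) (a i')} \<le> d1" if "i < N" "i' < N" for i i'
    using order_trans[OF ict_array_card_row_preimage[OF array, of i "{x. bad1 x (a i')}"]
        fibre_uniformD(2)[OF Y1]] fibre_uniformD(1)[OF Y1] that
    by simp
  have bad_rows: "card {i. i < N \<and> bad2 (c i j) (b j')} \<le> d2" if "j < N" "j' < N" for j j'
    using order_trans[OF ict_array_card_column_preimage[OF array, of j "{x. bad2 x (b j')}"]
        fibre_uniformD(2)[OF Y2]] fibre_uniformD(1)[OF Y2] that
    by simp
  have keys_in: "(\<lambda>i. key1 (a i)) ` {..<N} \<subseteq> key1 ` A1" "(\<lambda>j. key2 (b j)) ` {..<N} \<subseteq> key2 ` A2"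
    using a b by auto
  have keys_finite: "finite (key1 ` A1)" "finite (key2 ` A2)"
    using Y1 Y2 unfolding fibre_uniform_def by blast+
  have "\<exists>I J. I \<subseteq> {..<N} \<and> J \<subseteq> {..<N} \<and> card I = m \<and> card J = m \<and>
      (\<forall>i\<in>I. \<forall>i'\<in>I. key1 (a i) = key1 (a i')) \<and> (\<forall>j\<in>J. \<forall>j'\<in>J. key2 (b j) = key2 (b j')) \<and>
      (\<forall>i\<in>I. \<forall>i'\<in>I. \<forall>j\<in>J. \<not> bad1 (c i j) (a i')) \<and> (\<forall>j\<in>J. \<forall>j'\<in>J. \<forall>i\<in>I. \<not> bad2 (c i j) (b j'))"
    using bad_columns bad_rows N_def s_def
    by (intro grid_selection[where dc = d1 and dr = d2, OF keys_finite(1) keys_in(1) keys_finite(2) keys_in(2)])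
      auto
  then obtain I J where IJ: "I \<subseteq> {..<N}" "J \<subseteq> {..<N}" "card I = m" "card J = m"
    and keys: "\<forall>i\<in>I. \<forall>i'\<in>I. key1 (a i) = key1 (a i')" "\<forall>j\<in>J. \<forall>j'\<in>J. key2 (b j) = key2 (b j')"
    and good: "\<forall>i\<in>I. \<forall>i'\<in>I. \<forall>j\<in>J. \<not> bad1 (c i j) (a i')"
      "\<forall>j\<in>J. \<forall>j'\<in>J. \<forall>i\<in>I. \<not> bad2 (c i j) (b j')"
    by (elim exE conjE) (rule that; assumption)
  have "ict_array Z1 Z2 a b c I J"
    using ict_array_Int_drop_fibre_uniform[OF Y1 Y2 ict_array_mono[OF array IJ(1,2)] _ _ keys good]
      a b IJ(1,2) by blast
  moreover obtain f g where f: "bij_betw f {..<m} I" and g: "bij_betw g {..<m} J"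
  proof -
    obtain f g where "bij_betw f {0..<card I} I" "bij_betw g {0..<card J} J"
      using ex_bij_betw_nat_finite[OF finite_subset[OF IJ(1) finite_lessThan]]
        ex_bij_betw_nat_finite[OF finite_subset[OF IJ(2) finite_lessThan]] by blast
    then show thesis
      using that IJ(3,4) by (simp add: atLeast0LessThan)
  qed
  ultimately have array': "ict_array Z1 Z2 (a \<circ> f) (b \<circ> g) (\<lambda>i j. c (f i) (g j)) {..<m} {..<m}"
    by (rule ict_array_reindex)
  have "f i < N" "g i < N" if "i < m" for i
    using f g IJ(1,2) that by (auto dest: bij_betwE)
  then have "\<forall>i<m. (a \<circ> f) i \<in> A1" "\<forall>j<m. (b \<circ> g) j \<in> A2" "\<forall>i<m. \<forall>j<m. c (f i) (g j) \<in> C"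
    using a b c by simp_all
  with array' show ?thesis
    by (intro exI[of _ "a \<circ> f"] exI[of _ "b \<circ> g"] exI[of _ "\<lambda>i j. c (f i) (g j)"] conjI)
qed

section \<open>Transfer along the embedding into \<open>\<int>\<^sub>p\<close>\<close>

lemma ict_arrays_transfer_from_Zadd:
  fixes e :: "int \<Rightarrow> 'a"
  assumes Y1: "definable (UNIV :: int set) Zadd (Suc k) Y1" and Y2: "definable (UNIV :: int set) Zadd (Suc l) Y2"
    and e: "range e \<subseteq> M"
    and arrays: "\<forall>N. \<exists>a b c. (\<forall>i<N. a i \<in> tuples UNIV k) \<and> (\<forall>j<N. b j \<in> tuples UNIV l) \<and>
        (\<forall>i<N. \<forall>j<N. c i j \<in> UNIV) \<and>
        ict_array {xs \<in> Y1. map e xs \<in> X1} {xs \<in> Y2. map e xs \<in> X2} a b c {..<N} {..<N}"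
  shows "\<exists>a b c. (\<forall>i<N. a i \<in> tuples M k) \<and> (\<forall>j<N. b j \<in> tuples M l) \<and>
        (\<forall>i<N. \<forall>j<N. c i j \<in> M) \<and> ict_array X1 X2 a b c {..<N} {..<N}"
proof -
  obtain key1 :: "int list \<Rightarrow> int list \<times> bool list" and bad1 d1
    where fibres1: "fibre_uniform Y1 (tuples UNIV k) key1 bad1 d1"
    using Zadd_definable_fibre_uniform[OF Y1] by (auto simp: tuples_def)
  obtain key2 :: "int list \<Rightarrow> int list \<times> bool list" and bad2 d2
    where fibres2: "fibre_uniform Y2 (tuples UNIV l) key2 bad2 d2"
    using Zadd_definable_fibre_uniform[OF Y2] by (auto simp: tuples_def)
  have "{xs \<in> Y1. map e xs \<in> X1} = Y1 \<inter> {xs. map e xs \<in> X1}"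
    "{xs \<in> Y2. map e xs \<in> X2} = Y2 \<inter> {xs. map e xs \<in> X2}"
    by blast+
  note arrays' = arrays[unfolded this, rule_format]
  obtain a b c where a: "\<forall>i<N. a i \<in> tuples UNIV k" and b: "\<forall>j<N. b j \<in> tuples UNIV l"
    and "\<forall>i<N. \<forall>j<N. c i j \<in> UNIV"
    and array: "ict_array {xs. map e xs \<in> X1} {xs. map e xs \<in> X2} a b c {..<N} {..<N}"
    using ict_arrays_drop_fibre_uniform[OF fibres1 fibres2 arrays', where m = N]
    by (elim exE conjE) (rule that; assumption)
  have "\<forall>i<N. map e (a i) \<in> tuples M k" "\<forall>j<N. map e (b j) \<in> tuples M l"
    "\<forall>i<N. \<forall>j<N. e (c i j) \<in> M"
    using a b e by (auto simp: tuples_def)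
  with ict_array_map[OF array] show ?thesis
    by (intro exI[of _ "\<lambda>i. map e (a i)"] exI[of _ "\<lambda>j. map e (b j)"] exI[of _ "\<lambda>i j. e (c i j)"] conjI)
qed

lemma range_pembed: "range (pembed p) \<subseteq> Zp p"
  unfolding pembed_def Zp_def by (auto simp: mod_mod_cancel le_imp_power_dvd)

theorem proposition11p8:
  fixes p :: nat and I :: "'r \<Rightarrow> (nat \<Rightarrow> int) list \<Rightarrow> bool"
  assumes "prime p" and "odd p"
    and "expands_Zp p I"
    and "dp_minimal (Zp p) I"
    and "\<forall>n S. definable (UNIV :: int set) (induced p I) n S \<longrightarrow>
           (\<exists>X Y. definable (Zp p) I n X \<and> definable (UNIV :: int set) Zadd n Y \<and>
                  S = {xs \<in> Y. map (pembed p) xs \<in> X})"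
  shows "dp_minimal (UNIV :: int set) (induced p I)"
proof (rule ccontr)
  assume "\<not> dp_minimal (UNIV :: int set) (induced p I)"
  then obtain k l \<Phi> \<Psi> where \<Phi>: "definable UNIV (induced p I) (Suc k) \<Phi>"
    and \<Psi>: "definable UNIV (induced p I) (Suc l) \<Psi>"
    and arrays: "\<forall>N. \<exists>a b c. (\<forall>i<N. a i \<in> tuples UNIV k) \<and> (\<forall>j<N. b j \<in> tuples UNIV l) \<and>
        (\<forall>i<N. \<forall>j<N. c i j \<in> UNIV) \<and> ict_array \<Phi> \<Psi> a b c {..<N} {..<N}"
    unfolding dp_minimal_iff_ict_array not_not by (elim exE conjE) (rule that)
  obtain X1 Y1 where X1: "definable (Zp p) I (Suc k) X1" and Y1: "definable UNIV Zadd (Suc k) Y1"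
    and \<Phi>_eq: "\<Phi> = {xs \<in> Y1. map (pembed p) xs \<in> X1}"
    using assms(5)[rule_format, OF \<Phi>] by (elim exE conjE) (rule that)
  obtain X2 Y2 where X2: "definable (Zp p) I (Suc l) X2" and Y2: "definable UNIV Zadd (Suc l) Y2"
    and \<Psi>_eq: "\<Psi> = {xs \<in> Y2. map (pembed p) xs \<in> X2}"
    using assms(5)[rule_format, OF \<Psi>] by (elim exE conjE) (rule that)
  have "\<forall>N. \<exists>a b c. (\<forall>i<N. a i \<in> tuples (Zp p) k) \<and> (\<forall>j<N. b j \<in> tuples (Zp p) l) \<and>
      (\<forall>i<N. \<forall>j<N. c i j \<in> Zp p) \<and> ict_array X1 X2 a b c {..<N} {..<N}"
    using ict_arrays_transfer_from_Zadd[OF Y1 Y2 range_pembed arrays[unfolded \<Phi>_eq \<Psi>_eq]] by blast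
  then have "\<not> dp_minimal (Zp p) I"
    unfolding dp_minimal_iff_ict_array not_not using X1 X2 by blast
  with assms(4) show False
    by contradiction
qed

end
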